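(* For every $b,c\in\mathbb R$, each of the following systems has an isochronous center at the origin $O$ with zero Urabe function: (i) $\dot x=-y+\frac b3xy+x^2-\frac b3x^3$, $\dot y=x+by^2-2xy-\frac b3x^2-\frac{4b}{3}x^2y+\left(\frac{b^2}{27}+2\right)x^3+\frac b3x^4$; (ii) $\dot x=-y+\frac b4xy+x^2-\frac b4x^3$, $\dot y=x+by^2-2xy-\frac{3b}{8}x^2-\frac{3b}{2}x^2y+\left(\frac{b^2}{16}+2\right)x^3+\left(-\frac{b^3}{256}+\frac b2\right)x^4$; (iii) $\dot x=-y-\frac{45}{8}x^2y+x^2+\frac{45}{8}x^4$, $\dot y=x-2xy-\frac{225}{8}xy^2+\frac{19}{2}x^3+45x^3y$; (iv) $\dot x=-y+\frac{c^2}{2}x^2y+x^2-\frac{c^2}{2}x^4$, $\dot y=x+cy^2-2xy-\frac c2x^2+c^2xy^2-2cx^2y+2x^3-c^2x^3y+cx^4$.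
   Context: For a real planar polynomial system $\dot x=-y+A(x,y)$, $\dot y=x+B(x,y)$, with $A,B$ polynomials having no terms of degree $<2$, the origin $O$ is an isochronous center if there is a punctured neighborhood of $O$ in which every orbit is a closed orbit surrounding $O$ and all these orbits have the same period. Zero Urabe function: write the system as $\dot x=p_0(x)+p_1(x)y$, $\dot y=q_0(x)+q_1(x)y+q_2(x)y^2$ ($p_0(0)=q_0(0)=0$, $p_1(0)\ne0$), where it holds that $-\frac{p_1'p_0}{p_1}+q_1+p_0'-\frac{2q_2p_0}{p_1}\equiv0$. Put $f=-\frac{q_2+p_1'}{p_1}$, $g=-\frac{q_2p_0^2}{p_1}+q_1p_0-p_1q_0$ (the change $z=p_0+p_1y$ gives $\dot x=z$, $\dot z=-g(x)-f(x)z^2$), $F(x)=\int_0^xf$, and $\xi$ near $0$ by $\frac12\xi(x)^2=\int_0^xg(s)e^{2F(s)}ds$, $x\xi(x)>0$ for $x\ne0$. The Urabe function of an isochronous center is the odd analytic $h$ with $\frac{\xi(x)}{1+h(\xi(x))}=g(x)e^{F(x)}$; "zero Urabe function" means $h\equiv0$, i.e. $\xi(x)=g(x)e^{F(x)}$ near $0$. *)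

theory Defs
  imports "HOL-Analysis.Analysis" "HOL-Computational_Algebra.Polynomial"
begin

text \<open>Planar vector fields are maps (real \<times> real) \<Rightarrow> (real \<times> real); the system is
  x' = fst (V (x,y)), y' = snd (V (x,y)).\<close>

definition is_solution :: "(real \<times> real \<Rightarrow> real \<times> real) \<Rightarrow> (real \<Rightarrow> real \<times> real) \<Rightarrow> bool" where
  "is_solution V \<phi> \<longleftrightarrow> (\<forall>t. (\<phi> has_vector_derivative V (\<phi> t)) (at t))"

definition isochronous_center :: "(real \<times> real \<Rightarrow> real \<times> real) \<Rightarrow> bool" where
  "isochronous_center V \<longleftrightarrow>
     (\<exists>U T. open U \<and> (0,0) \<in> U \<and> T > 0 \<and>
        (\<forall>p \<in> U - {(0,0)}. \<exists>\<phi>. is_solution V \<phi> \<and> \<phi> 0 = p \<and>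
            (\<forall>t. \<phi> (t + T) = \<phi> t) \<and> (\<forall>s. 0 < s \<and> s < T \<longrightarrow> \<phi> s \<noteq> p) \<and>
            (0,0) \<in> inside (range \<phi>)))"

text \<open>Data attached to the decomposition x' = p0(x) + p1(x) y,
  y' = q0(x) + q1(x) y + q2(x) y^2.\<close>

definition urabe_f :: "real poly \<Rightarrow> real poly \<Rightarrow> real \<Rightarrow> real" where
  "urabe_f p1 q2 x = - (poly q2 x + poly (pderiv p1) x) / poly p1 x"

definition urabe_g :: "real poly \<Rightarrow> real poly \<Rightarrow> real poly \<Rightarrow> real poly \<Rightarrow> real poly \<Rightarrow> real \<Rightarrow> real" where
  "urabe_g p0 p1 q0 q1 q2 x =
     - (poly q2 x * (poly p0 x)\<^sup>2 / poly p1 x) + poly q1 x * poly p0 x - poly p1 x * poly q0 x"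

definition urabe_F :: "real poly \<Rightarrow> real poly \<Rightarrow> real \<Rightarrow> real" where
  "urabe_F p1 q2 x = (LBINT s=ereal 0..ereal x. urabe_f p1 q2 s)"

definition zero_urabe :: "(real \<times> real \<Rightarrow> real \<times> real) \<Rightarrow> bool" where
  "zero_urabe V \<longleftrightarrow>
     (\<exists>p0 p1 q0 q1 q2 :: real poly.
        (\<forall>x y. V (x, y) = (poly p0 x + poly p1 x * y,
                            poly q0 x + poly q1 x * y + poly q2 x * y\<^sup>2)) \<and>
        poly p0 0 = 0 \<and> poly q0 0 = 0 \<and> poly p1 0 \<noteq> 0 \<and>
        (\<forall>x. poly p1 x \<noteq> 0 \<longrightarrow>
           - poly (pderiv p1) x * poly p0 x / poly p1 x + poly q1 x + poly (pderiv p0) x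
           - 2 * poly q2 x * poly p0 x / poly p1 x = 0) \<and>
        (\<exists>\<delta> > 0. \<exists>\<xi> :: real \<Rightarrow> real.
           (\<forall>x. \<bar>x\<bar> < \<delta> \<longrightarrow>
              (\<xi> x)\<^sup>2 / 2 = (LBINT s=ereal 0..ereal x.
                                urabe_g p0 p1 q0 q1 q2 s * exp (2 * urabe_F p1 q2 s)) \<and>
              (x \<noteq> 0 \<longrightarrow> x * \<xi> x > 0)) \<and>
           (\<forall>x. \<bar>x\<bar> < \<delta> \<longrightarrow> \<xi> x = urabe_g p0 p1 q0 q1 q2 x * exp (urabe_F p1 q2 x))))"

end

theory Submission
  imports Defs
begin

(* Write z = p0(x) + p1(x) y, so that the system becomes x' = z,
   z' = -g(x) - f(x) z^2, and put F(x) = integral of f from 0 to x.  The zero Urabe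
   condition for xi(x) = g(x) e^F(x) is the linear ODE g' + f g = 1, which says exactly
   that xi'(x) = e^F(x).  Then the change of coordinates
     Phi(x, y) = (xi(x), z e^F(x))
   is a local diffeomorphism near O in which the system becomes the linear rotation
   u' = v, v' = -u.  Hence near O every orbit is the preimage under Phi of a circle
   around O, closed, surrounding O and of minimal period 2 pi; and since xi' = e^F with
   xi(0) = 0, the identity xi^2/2 = integral of g e^(2F) is the fundamental theorem of
   calculus. *)

text \<open>The substitution y = (z - p0(x)) / p1(x) turns z' = -g - f z^2 back into the
  Riccati equation y' = q0 + q1 y + q2 y^2, provided x' = z and the compatibility
  identity of the decomposition holds.  The left-hand side below is the quotient rule
  for the derivative of (Z - P0(X)) / P1(X).\<close>

lemma riccati_from_lienard:
  fixes P0 P1 dP0 dP1 Q0 Q1 Q2 Z dZ :: real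
  assumes nz: "P1 \<noteq> 0"
    and ident: "- dP1 * P0 / P1 + Q1 + dP0 - 2 * Q2 * P0 / P1 = 0"
    and dZ: "dZ = - (- (Q2 * P0\<^sup>2 / P1) + Q1 * P0 - P1 * Q0) - (- (Q2 + dP1) / P1) * Z\<^sup>2"
  shows "((dZ - dP0 * Z) * P1 - (Z - P0) * (dP1 * Z)) / (P1 * P1)
         = Q0 + Q1 * ((Z - P0) / P1) + Q2 * ((Z - P0) / P1)\<^sup>2"
proof -
  have "(- dP1 * P0 / P1 + Q1 + dP0 - 2 * Q2 * P0 / P1) * P1 = 0"
    using ident by simp
  then have "- dP1 * P0 + Q1 * P1 + dP0 * P1 - 2 * Q2 * P0 = 0"
    using nz by (simp add: algebra_simps)
  then have q1: "Q1 = (dP1 * P0 - dP0 * P1 + 2 * Q2 * P0) / P1"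
    using nz by (simp add: field_simps)
  show ?thesis
    unfolding dZ q1 using nz by (simp add: field_simps power2_eq_square)
qed

lemma norm_polar: "r \<ge> 0 \<Longrightarrow> norm (r * cos \<theta>, r * sin \<theta>) = (r::real)"
  by (simp add: norm_Pair power_mult_distrib flip: distrib_left)

lemma polar_coordinates:
  fixes w :: "real \<times> real"
  assumes "norm w = r" "r > 0"
  obtains \<beta> where "w = (r * cos \<beta>, r * sin \<beta>)"
proof -
  have "(fst w)\<^sup>2 + (snd w)\<^sup>2 = r\<^sup>2"
    using assms by (cases w) (auto simp: norm_Pair)
  then have "(fst w / r)\<^sup>2 + (snd w / r)\<^sup>2 = 1"
    using assms by (simp add: power_divide add_divide_distrib[symmetric])
  then obtain \<beta> where "fst w / r = cos \<beta>" "snd w / r = sin \<beta>"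
    by (rule sincos_total_2pi) auto
  then show ?thesis
    using assms by (intro that) (cases w, simp add: field_simps)
qed

lemma rotation_no_early_return:
  assumes "0 < s" "s < 2 * pi"
  shows "(cos (\<alpha> - s), sin (\<alpha> - s)) \<noteq> (cos \<alpha>, sin \<alpha>)"
proof
  assume "(cos (\<alpha> - s), sin (\<alpha> - s)) = (cos \<alpha>, sin \<alpha>)"
  then have "cos s = cos \<alpha> * cos \<alpha> + sin \<alpha> * sin \<alpha>"
    using cos_diff[of \<alpha> "\<alpha> - s"] by simp
  then have "cos s = 1"
    by (simp flip: power2_eq_square)
  then obtain n :: int where n: "s = real_of_int n * 2 * pi"
    using cos_one_2pi_int by blast
  then have "0 < real_of_int n" "real_of_int n < 1"
    using assms by (auto simp: zero_less_mult_iff)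
  then show False by simp
qed

text \<open>If Phi fixes the centre 0 of
  the ball, then the image under Psi of the bounding sphere surrounds 0: the component
  of its complement containing 0 stays inside the compact set Psi(cball 0 r).\<close>

lemma centre_inside_image_of_sphere:
  fixes Phi Psi :: "'a::euclidean_space \<Rightarrow> 'a"
  assumes "open S" "0 \<in> S" "r > 0"
    and Phi_cont: "continuous_on S Phi" and Psi_cont: "continuous_on (cball 0 r) Psi"
    and Psi_into: "Psi ` cball 0 r \<subseteq> S"
    and Phi_Psi: "\<And>w. w \<in> cball 0 r \<Longrightarrow> Phi (Psi w) = w"
    and Psi_Phi: "\<And>q. q \<in> S \<Longrightarrow> Psi (Phi q) = q"
    and Phi0: "Phi 0 = 0"
  shows "0 \<in> inside (Psi ` sphere 0 r)"
proof -
  let ?C = "Psi ` sphere 0 r"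
  let ?K = "connected_component_set (- ?C) 0"
  let ?B = "Psi ` cball 0 r"
  let ?W = "S \<inter> Phi -` ball 0 r"
  have not_on_curve: "0 \<notin> ?C"
  proof
    assume "0 \<in> ?C"
    then obtain w where "w \<in> sphere 0 r" "0 = Psi w" by blast
    then show False using Phi_Psi[of w] Phi0 \<open>r > 0\<close> by auto
  qed
  have compact_B: "compact ?B"
    using Psi_cont by (rule compact_continuous_image) simp
  have open_W: "open ?W"
    using continuous_open_preimage[OF Phi_cont \<open>open S\<close>, of "ball 0 r"] by (simp add: Int_commute)
  have W_in_B: "?W \<subseteq> ?B"
  proof
    fix q assume "q \<in> ?W"
    then have "q = Psi (Phi q)" "Phi q \<in> cball 0 r" using Psi_Phi by auto
    then show "q \<in> ?B" by blast
  qed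
  have K_split: "?K \<subseteq> ?W \<union> - ?B"
  proof
    fix q assume "q \<in> ?K"
    then have q_off: "q \<notin> ?C" using connected_component_subset by blast
    show "q \<in> ?W \<union> - ?B"
    proof (cases "q \<in> ?B")
      case True
      then obtain w where w: "w \<in> cball 0 r" "q = Psi w" by blast
      then have "w \<notin> sphere 0 r" using q_off by blast
      then have "Phi q \<in> ball 0 r" using w Phi_Psi by auto
      moreover have "q \<in> S" using w Psi_into by blast
      ultimately show ?thesis by blast
    qed simp
  qed
  have "?W \<inter> ?K \<noteq> {}"
    using not_on_curve \<open>0 \<in> S\<close> \<open>r > 0\<close> Phi0 by auto
  moreover have "open (- ?B)"
    using compact_imp_closed[OF compact_B] by (simp add: open_Compl)
  moreover have "?W \<inter> - ?B \<inter> ?K = {}"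
    using W_in_B by blast
  ultimately have "- ?B \<inter> ?K = {}"
    using connectedD[OF connected_connected_component open_W _ _ K_split] by blast
  then have "bounded ?K"
    using bounded_subset[OF compact_imp_bounded[OF compact_B]] by blast
  then show ?thesis
    using not_on_curve by (simp add: inside_def)
qed

section \<open>Systems whose Urabe function vanishes\<close>

locale zero_urabe_system =
  fixes V :: "real \<times> real \<Rightarrow> real \<times> real"
    and p0 p1 q0 q1 q2 :: "real poly" and \<delta> :: real
  assumes V_eq: "\<forall>x y. V (x, y) = (poly p0 x + poly p1 x * y,
                            poly q0 x + poly q1 x * y + poly q2 x * y\<^sup>2)"
    and p0_0: "poly p0 0 = 0" and q0_0: "poly q0 0 = 0"
    and ident: "\<forall>x. poly p1 x \<noteq> 0 \<longrightarrow>
           - poly (pderiv p1) x * poly p0 x / poly p1 x + poly q1 x + poly (pderiv p0) x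
           - 2 * poly q2 x * poly p0 x / poly p1 x = 0"
    and \<delta>_pos: "\<delta> > 0"
    and p1_nz: "\<And>x. \<bar>x\<bar> < \<delta> \<Longrightarrow> poly p1 x \<noteq> 0"
    and urabe_ode: "\<And>x. \<bar>x\<bar> < \<delta> \<Longrightarrow>
           (urabe_g p0 p1 q0 q1 q2 has_real_derivative
              1 - urabe_f p1 q2 x * urabe_g p0 p1 q0 q1 q2 x) (at x)"
begin

abbreviation "f \<equiv> urabe_f p1 q2"
abbreviation "g \<equiv> urabe_g p0 p1 q0 q1 q2"
abbreviation "F \<equiv> urabe_F p1 q2"

definition "E x = exp (F x)"
definition "xi x = g x * E x"

text \<open>The Urabe coordinate xi is strictly increasing on [-a, a]; its inverse xinv is
  defined on the interval (-r0, r0) around 0.\<close>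

definition "a = \<delta> / 2"
definition "r0 = min (- xi (- a)) (xi a)"
definition "xinv = inv_into {-a..a} xi"

lemma a_pos: "0 < a" "a < \<delta>"
  using \<delta>_pos by (auto simp: a_def)

lemma f_cont: "\<bar>x\<bar> < \<delta> \<Longrightarrow> isCont f x"
  unfolding urabe_f_def[abs_def] using p1_nz by (intro continuous_intros) auto

lemma F_deriv:
  assumes x: "\<bar>x\<bar> < \<delta>"
  shows "(F has_real_derivative f x) (at x)"
proof -
  define d where "d = (\<bar>x\<bar> + \<delta>) / 2"
  have d: "\<bar>x\<bar> < d" "d < \<delta>" using x by (auto simp: d_def)
  have "continuous_on {-d..d} f"
    using d f_cont by (intro continuous_at_imp_continuous_on) auto
  then have "(F has_vector_derivative f x) (at x within {-d..d})"
    unfolding urabe_F_def using d by (intro interval_integral_FTC2) auto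
  then show ?thesis
    using d by (simp add: at_within_Icc_at has_real_derivative_iff_has_vector_derivative)
qed

lemma E_pos: "E x > 0"
  by (simp add: E_def)

lemma E_deriv: "\<bar>x\<bar> < \<delta> \<Longrightarrow> (E has_real_derivative f x * E x) (at x)"
  unfolding E_def by (auto intro!: derivative_eq_intros F_deriv)

lemma xi_deriv:
  assumes x: "\<bar>x\<bar> < \<delta>"
  shows "(xi has_real_derivative E x) (at x)"
proof -
  have "(xi has_real_derivative (1 - f x * g x) * E x + f x * E x * g x) (at x)"
    unfolding xi_def[abs_def] by (rule DERIV_mult[OF urabe_ode[OF x] E_deriv[OF x]])
  then show ?thesis by (simp add: algebra_simps)
qed

lemma xi_0: "xi 0 = 0"
  by (simp add: xi_def urabe_g_def p0_0 q0_0)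

lemma xi_strict_mono: "-a \<le> x \<Longrightarrow> x < y \<Longrightarrow> y \<le> a \<Longrightarrow> xi x < xi y"
  by (rule DERIV_pos_imp_increasing) (use a_pos xi_deriv E_pos in force)+

lemma r0_pos: "r0 > 0"
  using xi_strict_mono[of "-a" 0] xi_strict_mono[of 0 a] a_pos xi_0 by (auto simp: r0_def)

lemma xinv_xi: "\<bar>x\<bar> \<le> a \<Longrightarrow> xinv (xi x) = x"
  unfolding xinv_def
  by (rule inv_into_f_f, rule strict_mono_on_imp_inj_on)
    (auto simp: strict_mono_on_def intro: xi_strict_mono)

lemma xi_xinv:
  assumes u: "\<bar>u\<bar> < r0"
  shows "\<bar>xinv u\<bar> < a" "xi (xinv u) = u"
proof -
  have "xi (-a) < u" "u < xi a" using u by (auto simp: r0_def)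
  moreover have "\<forall>x. -a \<le> x \<and> x \<le> a \<longrightarrow> isCont xi x"
    using a_pos by (auto intro!: DERIV_isCont[OF xi_deriv])
  ultimately obtain x where x: "-a \<le> x" "x \<le> a" "xi x = u"
    using IVT[of xi "-a" u a] a_pos by auto
  with \<open>xi (-a) < u\<close> \<open>u < xi a\<close> have "x \<noteq> a" "x \<noteq> -a" by auto
  with x have "\<bar>x\<bar> < a" by (auto simp: abs_less_iff)
  then show "\<bar>xinv u\<bar> < a" "xi (xinv u) = u" using x xinv_xi by auto
qed

lemma xinv_deriv:
  assumes u: "\<bar>u\<bar> < r0"
  shows "(xinv has_real_derivative inverse (E (xinv u))) (at u)"
proof (rule DERIV_inverse_function[where f = xi and a = "- r0" and b = r0])
  have x: "\<bar>xinv u\<bar> < a" using xi_xinv[OF u] by simp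
  then show "(xi has_real_derivative E (xinv u)) (at (xinv u))"
    using a_pos xi_deriv by simp
  have "isCont xinv (xi (xinv u))"
  proof (rule isCont_inverse_function2[where f = xi and g = xinv and x = "xinv u" and a = "-a" and b = a])
    show "-a < xinv u" "xinv u < a" using x by auto
    show "xinv (xi z) = z" if "-a \<le> z" "z \<le> a" for z
      using that xinv_xi by simp
    show "isCont xi z" if "-a \<le> z" "z \<le> a" for z
      using that a_pos by (intro DERIV_isCont[OF xi_deriv]) simp
  qed
  then show "isCont xinv u" using xi_xinv[OF u] by simp
  show "E (xinv u) \<noteq> 0" using E_pos[of "xinv u"] by simp
  show "xi (xinv y) = y" if "- r0 < y" "y < r0" for y
    using that xi_xinv(2) by simp
qed (use u in auto)

definition "Phi q = (xi (fst q), (poly p0 (fst q) + poly p1 (fst q) * snd q) * E (fst q))"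
definition "Psi w = (xinv (fst w),
    (snd w / E (xinv (fst w)) - poly p0 (xinv (fst w))) / poly p1 (xinv (fst w)))"

abbreviation "strip \<equiv> {q :: real \<times> real. \<bar>fst q\<bar> < a}"

lemma open_strip: "open strip"
  by (intro open_Collect_less continuous_intros)

lemma Phi_Psi:
  assumes "\<bar>fst w\<bar> < r0"
  shows "Phi (Psi w) = w"
proof -
  have "\<bar>xinv (fst w)\<bar> < \<delta>" using xi_xinv[OF assms] a_pos by simp
  then show ?thesis
    using p1_nz E_pos[of "xinv (fst w)"] xi_xinv[OF assms]
    by (cases w) (simp add: Phi_def Psi_def field_simps)
qed

lemma Psi_Phi:
  assumes "\<bar>fst q\<bar> \<le> a"
  shows "Psi (Phi q) = q"
proof -
  have "\<bar>fst q\<bar> < \<delta>" using assms a_pos by simp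
  then show ?thesis
    using p1_nz E_pos[of "fst q"] xinv_xi[OF assms]
    by (cases q) (simp add: Phi_def Psi_def field_simps)
qed

lemma Phi_0: "Phi (0, 0) = (0, 0)"
  by (simp add: Phi_def xi_0 p0_0)

lemma Phi_cont: "continuous_on strip Phi"
proof (intro continuous_at_imp_continuous_on ballI)
  fix q :: "real \<times> real" assume "q \<in> strip"
  then have "\<bar>fst q\<bar> < \<delta>" using a_pos by simp
  then have "isCont xi (fst q)" "isCont E (fst q)"
    using xi_deriv E_deriv DERIV_isCont by blast+
  then have "isCont (\<lambda>q. xi (fst q)) q" "isCont (\<lambda>q. E (fst q)) q"
    by (auto intro: isCont_o2[where f = fst])
  then show "isCont Phi q"
    unfolding Phi_def[abs_def] by (intro continuous_intros) auto
qed

lemma Psi_cont: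
  assumes "\<bar>fst w\<bar> < r0"
  shows "isCont Psi w"
proof -
  have x: "\<bar>xinv (fst w)\<bar> < \<delta>" using xi_xinv[OF assms] a_pos by simp
  have "isCont xinv (fst w)" using xinv_deriv[OF assms] DERIV_isCont by blast
  then have xinv_c: "isCont (\<lambda>w. xinv (fst w)) w" by (auto intro: isCont_o2[where f = fst])
  have "isCont E (xinv (fst w))" using E_deriv[OF x] DERIV_isCont by blast
  then have "isCont (\<lambda>w. E (xinv (fst w))) w" by (rule isCont_o2[OF xinv_c])
  then show ?thesis
    unfolding Psi_def[abs_def] using xinv_c p1_nz[OF x] E_pos[of "xinv (fst w)"]
    by (intro continuous_intros) auto
qed

section \<open>Orbits\<close>

text \<open>In the coordinates (x, z) with z = p0(x) + p1(x) y the system reads x' = z,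
  z' = -g(x) - f(x) z^2 (a Li\'enard equation); conversely every solution of the latter
  gives a solution of the system.\<close>

lemma solution_from_lienard:
  fixes X Z :: "real \<Rightarrow> real"
  assumes x: "\<bar>X t\<bar> < \<delta>"
    and dX: "(X has_real_derivative Z t) (at t)"
    and dZ: "(Z has_real_derivative - g (X t) - f (X t) * (Z t)\<^sup>2) (at t)"
  defines "Y \<equiv> \<lambda>t. (Z t - poly p0 (X t)) / poly p1 (X t)"
  shows "((\<lambda>t. (X t, Y t)) has_vector_derivative V (X t, Y t)) (at t)"
proof -
  have nz: "poly p1 (X t) \<noteq> 0" using p1_nz[OF x] .
  have dP: "((\<lambda>t. poly p (X t)) has_real_derivative poly (pderiv p) (X t) * Z t) (at t)" for p
    using DERIV_chain2[OF poly_DERIV dX] .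
  have "(Y has_real_derivative
          ((- g (X t) - f (X t) * (Z t)\<^sup>2 - poly (pderiv p0) (X t) * Z t) * poly p1 (X t)
           - (Z t - poly p0 (X t)) * (poly (pderiv p1) (X t) * Z t))
          / (poly p1 (X t) * poly p1 (X t))) (at t)"
    unfolding Y_def using DERIV_divide[OF DERIV_diff[OF dZ dP] dP nz] by simp
  moreover have "((- g (X t) - f (X t) * (Z t)\<^sup>2 - poly (pderiv p0) (X t) * Z t) * poly p1 (X t)
           - (Z t - poly p0 (X t)) * (poly (pderiv p1) (X t) * Z t))
          / (poly p1 (X t) * poly p1 (X t))
        = poly q0 (X t) + poly q1 (X t) * Y t + poly q2 (X t) * (Y t)\<^sup>2"
    unfolding Y_def using nz ident
    by (intro riccati_from_lienard) (auto simp: urabe_f_def urabe_g_def)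
  ultimately have dY: "(Y has_real_derivative
        poly q0 (X t) + poly q1 (X t) * Y t + poly q2 (X t) * (Y t)\<^sup>2) (at t)"
    by (rule DERIV_cong)
  have "Z t = poly p0 (X t) + poly p1 (X t) * Y t"
    unfolding Y_def using nz by simp
  then show ?thesis
    using dX dY V_eq
    by (auto intro!: has_vector_derivative_Pair
        simp: has_real_derivative_iff_has_vector_derivative[symmetric])
qed

lemma lienard_from_rotation:
  fixes u v :: "real \<Rightarrow> real"
  assumes u: "\<bar>u t\<bar> < r0"
    and du: "(u has_real_derivative v t) (at t)" and dv: "(v has_real_derivative - u t) (at t)"
  defines "X \<equiv> \<lambda>t. xinv (u t)" and "Z \<equiv> \<lambda>t. v t / E (xinv (u t))"
  shows "\<bar>X t\<bar> < \<delta>" "(X has_real_derivative Z t) (at t)"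
    and "(Z has_real_derivative - g (X t) - f (X t) * (Z t)\<^sup>2) (at t)"
proof -
  have Z_eq: "Z = (\<lambda>t. v t / E (X t))" by (simp add: Z_def X_def)
  show x: "\<bar>X t\<bar> < \<delta>" using xi_xinv[OF u] a_pos by (simp add: X_def)
  have E_nz: "E (X t) \<noteq> 0" using E_pos[of "X t"] by simp
  show dX: "(X has_real_derivative Z t) (at t)"
    unfolding X_def Z_def using DERIV_chain2[OF xinv_deriv[OF u] du] E_nz
    by (simp add: field_simps)
  have dZ: "((\<lambda>t. v t / E (X t)) has_real_derivative
          (- u t * E (X t) - v t * (f (X t) * E (X t) * Z t)) / (E (X t) * E (X t))) (at t)"
    by (rule DERIV_divide[OF dv DERIV_chain2[OF E_deriv[OF x] dX] E_nz])
  have "u t = g (X t) * E (X t)"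
    using xi_xinv[OF u] by (simp add: X_def xi_def)
  then have "(- u t * E (X t) - v t * (f (X t) * E (X t) * Z t)) / (E (X t) * E (X t))
      = - g (X t) - f (X t) * (Z t)\<^sup>2"
    using E_nz by (simp add: Z_eq field_simps power2_eq_square)
  then show "(Z has_real_derivative - g (X t) - f (X t) * (Z t)\<^sup>2) (at t)"
    using dZ unfolding Z_eq[symmetric] by simp
qed

lemma circle_solution:
  assumes r: "0 < r" "r < r0"
  shows "is_solution V (\<lambda>t. Psi (r * cos (\<alpha> - t), r * sin (\<alpha> - t)))"
  unfolding is_solution_def
proof
  fix t
  define u where "u = (\<lambda>t. r * cos (\<alpha> - t))"
  define v where "v = (\<lambda>t. r * sin (\<alpha> - t))"
  have "\<bar>u t\<bar> \<le> r" using r abs_cos_le_one by (simp add: u_def abs_mult)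
  then have u: "\<bar>u t\<bar> < r0" using r by linarith
  have du: "(u has_real_derivative v t) (at t)" and dv: "(v has_real_derivative - u t) (at t)"
    unfolding u_def v_def by (auto intro!: derivative_eq_intros)
  note L = lienard_from_rotation[OF u du dv]
  show "((\<lambda>t. Psi (u t, v t)) has_vector_derivative V (Psi (u t, v t))) (at t)"
    using solution_from_lienard[OF L] by (simp add: Psi_def)
qed

lemma circle_orbit:
  assumes pU: "p \<in> (strip \<inter> Phi -` ball 0 r0) - {(0, 0)}"
  shows "\<exists>\<phi>. is_solution V \<phi> \<and> \<phi> 0 = p \<and> (\<forall>t. \<phi> (t + 2 * pi) = \<phi> t) \<and>
          (\<forall>s. 0 < s \<and> s < 2 * pi \<longrightarrow> \<phi> s \<noteq> p) \<and> (0, 0) \<in> inside (range \<phi>)"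
proof -
  define r where "r = norm (Phi p)"
  have p_strip: "\<bar>fst p\<bar> < a" and r_lt: "r < r0" using pU by (auto simp: r_def)
  have Psi_p: "Psi (Phi p) = p" using Psi_Phi p_strip by simp
  have r_pos: "r > 0"
    using pU Psi_p Phi_0 Psi_Phi[of "(0, 0)"] by (auto simp: r_def zero_prod_def)
  obtain \<alpha> where \<alpha>: "Phi p = (r * cos \<alpha>, r * sin \<alpha>)"
    using polar_coordinates[of "Phi p" r] r_pos by (auto simp: r_def)
  define \<phi> where "\<phi> = (\<lambda>t. Psi (r * cos (\<alpha> - t), r * sin (\<alpha> - t)))"
  have in_ball: "\<bar>fst w\<bar> < r0" if "w \<in> cball 0 r" for w :: "real \<times> real"
    using that r_lt norm_fst_le[of "fst w" "snd w"] by simp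
  have Phi_\<phi>: "Phi (\<phi> t) = (r * cos (\<alpha> - t), r * sin (\<alpha> - t))" for t
    unfolding \<phi>_def using in_ball[of "(r * cos (\<alpha> - t), r * sin (\<alpha> - t))"] r_pos norm_polar[of r]
    by (intro Phi_Psi) simp
  have range_\<phi>: "range \<phi> = Psi ` sphere 0 r"
  proof
    show "range \<phi> \<subseteq> Psi ` sphere 0 r"
      unfolding \<phi>_def using norm_polar r_pos by auto
    show "Psi ` sphere 0 r \<subseteq> range \<phi>"
    proof
      fix q assume "q \<in> Psi ` sphere 0 r"
      then obtain w where w: "norm w = r" "q = Psi w" by auto
      then obtain \<beta> where "w = (r * cos \<beta>, r * sin \<beta>)"
        using polar_coordinates r_pos by blast
      then have "q = \<phi> (\<alpha> - \<beta>)" using w by (simp add: \<phi>_def)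
      then show "q \<in> range \<phi>" by simp
    qed
  qed
  have inside: "(0, 0) \<in> inside (range \<phi>)"
    unfolding range_\<phi> zero_prod_def[symmetric]
  proof (rule centre_inside_image_of_sphere[where S = strip and Phi = Phi])
    show "open strip" by (rule open_strip)
    show "0 \<in> strip" using a_pos by simp
    show "continuous_on (cball 0 r) Psi"
      by (intro continuous_at_imp_continuous_on ballI Psi_cont in_ball)
    show "Psi ` cball 0 r \<subseteq> strip"
      using in_ball xi_xinv(1) by (auto simp: Psi_def)
    show "Phi (Psi w) = w" if "w \<in> cball 0 r" for w
      using Phi_Psi[OF in_ball[OF that]] .
    show "Psi (Phi q) = q" if "q \<in> strip" for q
      using Psi_Phi that by simp
    show "Phi 0 = 0"
      using Phi_0 by (simp add: zero_prod_def)
  qed (use r_pos Phi_cont in simp_all)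
  have periodic: "\<phi> (t + 2 * pi) = \<phi> t" for t
  proof -
    have "\<alpha> - t = (\<alpha> - (t + 2 * pi)) + 2 * pi" by simp
    then show ?thesis by (simp only: \<phi>_def cos_periodic sin_periodic)
  qed
  have no_return: "\<phi> s \<noteq> p" if "0 < s \<and> s < 2 * pi" for s
    using Phi_\<phi>[of s] \<alpha> rotation_no_early_return[of s \<alpha>] that r_pos by auto
  have "is_solution V \<phi>"
    unfolding \<phi>_def by (rule circle_solution[OF r_pos r_lt])
  moreover have "\<phi> 0 = p"
    using Psi_p \<alpha> by (simp add: \<phi>_def)
  ultimately show ?thesis
    using periodic no_return inside by blast
qed

theorem isochronous: "isochronous_center V"
  unfolding isochronous_center_def
proof (rule exI[of _ "strip \<inter> Phi -` ball 0 r0"], rule exI[of _ "2 * pi"], intro conjI)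
  show "open (strip \<inter> Phi -` ball 0 r0)"
    using continuous_open_preimage[OF Phi_cont open_strip open_ball] by blast
  show "(0, 0) \<in> strip \<inter> Phi -` ball 0 r0"
    using Phi_0 r0_pos a_pos by simp
  show "\<forall>p \<in> strip \<inter> Phi -` ball 0 r0 - {(0, 0)}. \<exists>\<phi>. is_solution V \<phi> \<and> \<phi> 0 = p \<and>
          (\<forall>t. \<phi> (t + 2 * pi) = \<phi> t) \<and> (\<forall>s. 0 < s \<and> s < 2 * pi \<longrightarrow> \<phi> s \<noteq> p) \<and>
          (0, 0) \<in> inside (range \<phi>)"
    using circle_orbit by blast
qed simp

theorem zero_urabe: "zero_urabe V"
  unfolding zero_urabe_def
proof (intro exI conjI)
  show "\<forall>x. \<bar>x\<bar> < a \<longrightarrow> xi x = g x * exp (F x)"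
    by (simp add: xi_def E_def)
  show "\<forall>x. \<bar>x\<bar> < a \<longrightarrow> (xi x)\<^sup>2 / 2 = (LBINT s=ereal 0..ereal x. g s * exp (2 * F s))
                          \<and> (x \<noteq> 0 \<longrightarrow> x * xi x > 0)"
  proof (intro allI impI conjI)
    fix x assume x: "\<bar>x\<bar> < a"
    then have seg: "\<bar>s\<bar> < \<delta>" if "s \<in> {min 0 x..max 0 x}" for s
      using that a_pos by (auto simp: min_def max_def split: if_splits)
    have deriv: "((\<lambda>s. (xi s)\<^sup>2 / 2) has_real_derivative g s * exp (2 * F s)) (at s)"
      if "\<bar>s\<bar> < \<delta>" for s
    proof -
      have "((\<lambda>s. (xi s)\<^sup>2 / 2) has_real_derivative 2 * xi s * E s / 2) (at s)"
        using that by (auto intro!: derivative_eq_intros xi_deriv)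
      moreover have "2 * xi s * E s / 2 = g s * exp (2 * F s)"
        by (simp add: xi_def E_def exp_double power2_eq_square)
      ultimately show ?thesis by (rule DERIV_cong)
    qed
    have "(LBINT s=ereal 0..ereal x. g s * exp (2 * F s)) = (xi x)\<^sup>2 / 2 - (xi 0)\<^sup>2 / 2"
    proof (rule interval_integral_FTC_finite)
      have "isCont (\<lambda>s. g s * exp (2 * F s)) s" if "\<bar>s\<bar> < \<delta>" for s
        using DERIV_isCont[OF urabe_ode[OF that]] DERIV_isCont[OF F_deriv[OF that]]
        by (intro continuous_intros)
      then show "continuous_on {min 0 x..max 0 x} (\<lambda>s. g s * exp (2 * F s))"
        using seg by (intro continuous_at_imp_continuous_on ballI) simp
      show "((\<lambda>s. (xi s)\<^sup>2 / 2) has_vector_derivative g s * exp (2 * F s))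
              (at s within {min 0 x..max 0 x})" if "min 0 x \<le> s" "s \<le> max 0 x" for s
        using deriv[of s] seg[of s] that
        by (simp add: has_real_derivative_iff_has_vector_derivative[symmetric]
            has_field_derivative_at_within)
    qed
    then show "(xi x)\<^sup>2 / 2 = (LBINT s=ereal 0..ereal x. g s * exp (2 * F s))"
      by (simp add: xi_0)
    show "x \<noteq> 0 \<Longrightarrow> x * xi x > 0"
      using xi_strict_mono[of x 0] xi_strict_mono[of 0 x] x xi_0
      by (cases "x < 0") (auto simp: mult_neg_neg)
  qed
qed (use V_eq p0_0 q0_0 ident a_pos p1_nz[of 0] \<delta>_pos in auto)

end

section \<open>Systems of the special form p1 = -m, p0 = x^2 m\<close>

text \<open>If x' = m(x) (x^2 - y) and the coefficient of y in y' is -2x (m + x q2), the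
  compatibility identity holds automatically, g = m k with
  k = q0 - 2 x^3 m - x^4 q2, and g' + f g = 1 becomes the polynomial identity
  m k' + q2 k = 1.\<close>

lemma isochronous_zero_urabe_special_form:
  fixes V :: "real \<times> real \<Rightarrow> real \<times> real" and m q0 q2 k :: "real poly"
  assumes V_eq: "\<forall>x y. V (x, y) = (poly m x * (x\<^sup>2 - y),
                    poly q0 x - 2 * x * (poly m x + x * poly q2 x) * y + poly q2 x * y\<^sup>2)"
    and q0_0: "poly q0 0 = 0" and m_0: "poly m 0 \<noteq> 0"
    and k: "\<And>x. poly k x = poly q0 x - 2 * x ^ 3 * poly m x - x ^ 4 * poly q2 x"
    and ode: "\<And>x. poly m x * poly (pderiv k) x + poly q2 x * poly k x = 1"
  shows "isochronous_center V \<and> zero_urabe V"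
proof -
  define p0 where "p0 = [:0, 0, 1:] * m"
  define p1 where "p1 = - m"
  define q1 where "q1 = - smult 2 ([:0, 1:] * m + [:0, 0, 1:] * q2)"
  obtain \<delta> :: real where \<delta>: "\<delta> > 0" and m_nz: "\<And>x. \<bar>x\<bar> < \<delta> \<Longrightarrow> poly m x \<noteq> 0"
    using continuous_at_avoid[of 0 "poly m" 0] m_0 by (auto simp: dist_real_def)
  have g: "urabe_g p0 p1 q0 q1 q2 x = poly m x * poly k x" for x
    by (cases "poly m x = 0")
      (simp_all add: urabe_g_def p0_def p1_def q1_def k field_simps power2_eq_square
        power3_eq_cube power4_eq_xxxx)
  have "zero_urabe_system V p0 p1 q0 q1 q2 \<delta>"
  proof
    show "\<forall>x y. V (x, y) = (poly p0 x + poly p1 x * y,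
                            poly q0 x + poly q1 x * y + poly q2 x * y\<^sup>2)"
      using V_eq by (simp add: p0_def p1_def q1_def algebra_simps power2_eq_square)
    show "\<forall>x. poly p1 x \<noteq> 0 \<longrightarrow>
           - poly (pderiv p1) x * poly p0 x / poly p1 x + poly q1 x + poly (pderiv p0) x
           - 2 * poly q2 x * poly p0 x / poly p1 x = 0"
      by (simp add: p0_def p1_def q1_def pderiv_mult pderiv_pCons pderiv_minus field_simps
          power2_eq_square)
    fix x :: real assume x: "\<bar>x\<bar> < \<delta>"
    show "poly p1 x \<noteq> 0" using m_nz[OF x] by (simp add: p1_def)
    have "((\<lambda>x. poly m x * poly k x) has_real_derivative
            poly (pderiv m) x * poly k x + poly (pderiv k) x * poly m x) (at x)"
      by (rule DERIV_mult[OF poly_DERIV poly_DERIV])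
    moreover have "urabe_f p1 q2 x * urabe_g p0 p1 q0 q1 q2 x
        = (poly q2 x - poly (pderiv m) x) * poly k x"
      using m_nz[OF x] unfolding g by (simp add: urabe_f_def p1_def pderiv_minus field_simps)
    then have "poly (pderiv m) x * poly k x + poly (pderiv k) x * poly m x
        = 1 - urabe_f p1 q2 x * urabe_g p0 p1 q0 q1 q2 x"
      using ode[of x] by (simp add: algebra_simps)
    ultimately show "(urabe_g p0 p1 q0 q1 q2 has_real_derivative
              1 - urabe_f p1 q2 x * urabe_g p0 p1 q0 q1 q2 x) (at x)"
      by (simp add: g[abs_def])
  qed (use q0_0 \<delta> in \<open>simp_all add: p0_def\<close>)
  then show ?thesis
    using zero_urabe_system.isochronous zero_urabe_system.zero_urabe by blast
qed

text \<open>Each system of the theorem has the special form above; the polynomials m, q0, q2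
  are read off from the system and k = q0 - 2 x^3 m - x^4 q2.\<close>

lemma system_i:
  fixes b :: real
  shows "isochronous_center (\<lambda>(x::real, y::real).
     (- y + b/3 * x * y + x^2 - b/3 * x^3,
      x + b * y^2 - 2 * x * y - b/3 * x^2 - 4*b/3 * x^2 * y + (b^2/27 + 2) * x^3 + b/3 * x^4)) \<and>
    zero_urabe (\<lambda>(x::real, y::real).
     (- y + b/3 * x * y + x^2 - b/3 * x^3,
      x + b * y^2 - 2 * x * y - b/3 * x^2 - 4*b/3 * x^2 * y + (b^2/27 + 2) * x^3 + b/3 * x^4))"
  by (rule isochronous_zero_urabe_special_form[of _ "[:1, -b/3:]"
        "[:0, 1, -b/3, b^2/27 + 2, b/3:]" "[:b:]" "[:0, 1, -b/3, b^2/27:]"])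
    (auto simp: pderiv_pCons field_simps power2_eq_square power3_eq_cube power4_eq_xxxx)

lemma system_ii:
  fixes b :: real
  shows "isochronous_center (\<lambda>(x::real, y::real).
     (- y + b/4 * x * y + x^2 - b/4 * x^3,
      x + b * y^2 - 2 * x * y - 3*b/8 * x^2 - 3*b/2 * x^2 * y + (b^2/16 + 2) * x^3
        + (b/2 - b^3/256) * x^4)) \<and>
    zero_urabe (\<lambda>(x::real, y::real).
     (- y + b/4 * x * y + x^2 - b/4 * x^3,
      x + b * y^2 - 2 * x * y - 3*b/8 * x^2 - 3*b/2 * x^2 * y + (b^2/16 + 2) * x^3
        + (b/2 - b^3/256) * x^4))"
  by (rule isochronous_zero_urabe_special_form[of _ "[:1, -b/4:]"
        "[:0, 1, -3*b/8, b^2/16 + 2, b/2 - b^3/256 :]" "[:b:]"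
        "[:0, 1, -3*b/8, b^2/16, - (b^3/256) :]"])
    (auto simp: pderiv_pCons field_simps power2_eq_square power3_eq_cube power4_eq_xxxx)

lemma system_iii:
  shows "isochronous_center (\<lambda>(x::real, y::real).
     (- y - 45/8 * x^2 * y + x^2 + 45/8 * x^4,
      x - 2 * x * y - 225/8 * x * y^2 + 19/2 * x^3 + 45 * x^3 * y)) \<and>
    zero_urabe (\<lambda>(x::real, y::real).
     (- y - 45/8 * x^2 * y + x^2 + 45/8 * x^4,
      x - 2 * x * y - 225/8 * x * y^2 + 19/2 * x^3 + 45 * x^3 * y))"
  by (rule isochronous_zero_urabe_special_form[of _ "[:1, 0, 45/8:]"
        "[:0, 1, 0, 19/2:]" "[:0, -225/8:]" "[:0, 1, 0, 15/2, 0, 135/8:]"])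
    (auto simp: pderiv_pCons field_simps power2_eq_square power3_eq_cube power4_eq_xxxx)

lemma system_iv:
  fixes c :: real
  shows "isochronous_center (\<lambda>(x::real, y::real).
     (- y + c^2/2 * x^2 * y + x^2 - c^2/2 * x^4,
      x + c * y^2 - 2 * x * y - c/2 * x^2 + c^2 * x * y^2 - 2 * c * x^2 * y + 2 * x^3
        - c^2 * x^3 * y + c * x^4)) \<and>
    zero_urabe (\<lambda>(x::real, y::real).
     (- y + c^2/2 * x^2 * y + x^2 - c^2/2 * x^4,
      x + c * y^2 - 2 * x * y - c/2 * x^2 + c^2 * x * y^2 - 2 * c * x^2 * y + 2 * x^3
        - c^2 * x^3 * y + c * x^4))"
  by (rule isochronous_zero_urabe_special_form[of _ "[:1, 0, - (c^2/2) :]"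
        "[:0, 1, -c/2, 2, c:]" "[:c, c^2:]" "[:0, 1, -c/2:]"])
    (auto simp: pderiv_pCons field_simps power2_eq_square power3_eq_cube power4_eq_xxxx)

theorem theorem4p2:
  fixes b c :: real
  defines "V1 \<equiv> (\<lambda>(x::real, y::real).
     (- y + b/3 * x * y + x^2 - b/3 * x^3,
      x + b * y^2 - 2 * x * y - b/3 * x^2 - 4*b/3 * x^2 * y + (b^2/27 + 2) * x^3 + b/3 * x^4))"
    and "V2 \<equiv> (\<lambda>(x::real, y::real).
     (- y + b/4 * x * y + x^2 - b/4 * x^3,
      x + b * y^2 - 2 * x * y - 3*b/8 * x^2 - 3*b/2 * x^2 * y + (b^2/16 + 2) * x^3
        + (b/2 - b^3/256) * x^4))"
    and "V3 \<equiv> (\<lambda>(x::real, y::real).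
     (- y - 45/8 * x^2 * y + x^2 + 45/8 * x^4,
      x - 2 * x * y - 225/8 * x * y^2 + 19/2 * x^3 + 45 * x^3 * y))"
    and "V4 \<equiv> (\<lambda>(x::real, y::real).
     (- y + c^2/2 * x^2 * y + x^2 - c^2/2 * x^4,
      x + c * y^2 - 2 * x * y - c/2 * x^2 + c^2 * x * y^2 - 2 * c * x^2 * y + 2 * x^3
        - c^2 * x^3 * y + c * x^4))"
  shows "(isochronous_center V1 \<and> zero_urabe V1) \<and>
         (isochronous_center V2 \<and> zero_urabe V2) \<and>
         (isochronous_center V3 \<and> zero_urabe V3) \<and>
         (isochronous_center V4 \<and> zero_urabe V4)"
  unfolding V1_def V2_def V3_def V4_def
  using system_i[of b] system_ii[of b] system_iii system_iv[of c] by blast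

end
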